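(* Let $w\in F_2$ be a word in $x,y$ whose trace map $\psi_w$ is Big, and define words recursively by $v_1(x,y)=w(x,y)$, $v_{n+1}(x,y)=w(v_n(x,y),y)$. Then for every $n\ge 1$ the word map $v_n:\mathrm{SL}(2,\mathbb{C})^2\to\mathrm{SL}(2,\mathbb{C})$ is almost surjective, i.e. its image contains $\mathrm{SL}(2,\mathbb{C})\setminus\{-\mathrm{id}\}$.
   Context: For a word $w(x,y)$ there are polynomials $P_w(s,t,u)$, $Q_w(s,t,u)$ such that for all $x,y\in\mathrm{SL}(2,\mathbb{C})$: $\mathrm{tr}(w(x,y))=P_w(\mathrm{tr}\,x,\mathrm{tr}\,y,\mathrm{tr}\,xy)$ and $\mathrm{tr}(w(x,y)y)=Q_w(\mathrm{tr}\,x,\mathrm{tr}\,y,\mathrm{tr}\,xy)$. The trace map is $\psi_w(s,t,u)=(P_w(s,t,u),t,Q_w(s,t,u))$. For $a\in\mathbb{C}$, $\psi_a(s,u)=(P_w(s,a,u),Q_w(s,a,u))$ is Big if $\psi_a(\mathbb{C}^2)=\mathbb{C}^2\setminus T_a$ with $T_a$ finite; $\psi_w$ is Big if some $\psi_a$ is Big. *)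

theory Defs
  imports "HOL-Analysis.Analysis"
begin

type_synonym mat2 = "complex^2^2"

definition SL2 :: "mat2 set" where
  "SL2 = {A. det A = 1}"

text \<open>Words in the free group F_2 on x, y: lists of letters, each letter a generator
  together with a flag saying whether it is inverted.\<close>
datatype gen = GX | GY

type_synonym word = "(gen \<times> bool) list"

fun eval_letter :: "mat2 \<Rightarrow> mat2 \<Rightarrow> gen \<times> bool \<Rightarrow> mat2" where
  "eval_letter x y (GX, False) = x"
| "eval_letter x y (GX, True) = matrix_inv x"
| "eval_letter x y (GY, False) = y"
| "eval_letter x y (GY, True) = matrix_inv y"

definition eval_word :: "word \<Rightarrow> mat2 \<Rightarrow> mat2 \<Rightarrow> mat2" where
  "eval_word w x y = foldr (\<lambda>l M. eval_letter x y l ** M) w (mat 1)"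

fun iter_word_map :: "word \<Rightarrow> nat \<Rightarrow> mat2 \<Rightarrow> mat2 \<Rightarrow> mat2" where
  "iter_word_map w 0 x y = x"
| "iter_word_map w (Suc n) x y = eval_word w (iter_word_map w n x y) y"

definition poly3 :: "(complex \<Rightarrow> complex \<Rightarrow> complex \<Rightarrow> complex) \<Rightarrow> bool" where
  "poly3 P \<longleftrightarrow> (\<exists>(c :: nat \<Rightarrow> nat \<Rightarrow> nat \<Rightarrow> complex) N.
      \<forall>s t u. P s t u = (\<Sum>i\<le>N. \<Sum>j\<le>N. \<Sum>k\<le>N. c i j k * s ^ i * t ^ j * u ^ k))"

definition trace_polys :: "word \<Rightarrow> (complex \<Rightarrow> complex \<Rightarrow> complex \<Rightarrow> complex)
    \<Rightarrow> (complex \<Rightarrow> complex \<Rightarrow> complex \<Rightarrow> complex) \<Rightarrow> bool" where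
  "trace_polys w P Q \<longleftrightarrow> poly3 P \<and> poly3 Q \<and>
     (\<forall>x\<in>SL2. \<forall>y\<in>SL2.
        trace (eval_word w x y) = P (trace x) (trace y) (trace (x ** y)) \<and>
        trace (eval_word w x y ** y) = Q (trace x) (trace y) (trace (x ** y)))"

definition psi_a_big :: "(complex \<Rightarrow> complex \<Rightarrow> complex \<Rightarrow> complex)
    \<Rightarrow> (complex \<Rightarrow> complex \<Rightarrow> complex \<Rightarrow> complex) \<Rightarrow> complex \<Rightarrow> bool" where
  "psi_a_big P Q a \<longleftrightarrow> (\<exists>T. finite T \<and>
     (\<lambda>(s, u). (P s a u, Q s a u)) ` UNIV = UNIV - T)"

text \<open>The trace map psi_w is Big (P_w, Q_w are uniquely determined as functions,
  since (x,y) \<mapsto> (tr x, tr y, tr xy) maps SL2^2 onto C^3).\<close>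
definition trace_map_big :: "word \<Rightarrow> bool" where
  "trace_map_big w \<longleftrightarrow> (\<exists>P Q. trace_polys w P Q \<and> (\<exists>a. psi_a_big P Q a))"

end

theory Submission
  imports Defs
begin

text \<open>The trace polynomials turn the pair (tr v_n(x,y), tr(v_n(x,y) y)) into the image of
  (tr x, tr xy) under the n-th iterate of psi_a, where a = tr y. An iterate of a map with
  cofinite image again has cofinite image, so for every c there are such x, y with
  tr v_n(x,y) = c and tr(v_n(x,y) y) \<notin> {a, -a}; the latter forces v_n(x,y) \<noteq> \<plusminus>id.
  Elements of SL(2,\<complex>) other than \<plusminus>id are conjugate to the companion matrix of their
  trace, and the image of a word map is closed under conjugation, so it contains every
  z \<noteq> \<plusminus>id; finally id = v_n(id, id).\<close>

definition mat22 :: "complex \<Rightarrow> complex \<Rightarrow> complex \<Rightarrow> complex \<Rightarrow> mat2" where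
  "mat22 a b c d = vector [vector [a, b], vector [c, d]]"

lemma mat22_nth [simp]:
  "mat22 a b c d $ 1 $ 1 = a" "mat22 a b c d $ 1 $ 2 = b"
  "mat22 a b c d $ 2 $ 1 = c" "mat22 a b c d $ 2 $ 2 = d"
  by (simp_all add: mat22_def)

lemma mat22_cases: obtains a b c d where "A = mat22 a b c d"
proof
  show "A = mat22 (A$1$1) (A$1$2) (A$2$1) (A$2$2)"
    by (simp add: vec_eq_iff forall_2)
qed

lemma mat22_eq_iff [simp]:
  "mat22 a b c d = mat22 a' b' c' d' \<longleftrightarrow> a = a' \<and> b = b' \<and> c = c' \<and> d = d'"
  by (metis mat22_nth)

lemma mat22_mult [simp]:
  "mat22 a b c d ** mat22 e f g h = mat22 (a*e + b*g) (a*f + b*h) (c*e + d*g) (c*f + d*h)"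
  by (simp add: vec_eq_iff forall_2 matrix_matrix_mult_def sum_2)

lemma mat_1_eq_mat22: "mat 1 = mat22 1 0 0 1"
  by (simp add: vec_eq_iff forall_2 mat_def)

lemma uminus_mat22 [simp]: "- mat22 a b c d = mat22 (-a) (-b) (-c) (-d)"
  by (simp add: vec_eq_iff forall_2)

lemma det_mat22 [simp]: "det (mat22 a b c d) = a*d - b*c"
  by (simp add: det_2)

lemma trace_mat22 [simp]: "trace (mat22 a b c d) = a + d"
  by (simp add: trace_def sum_2)

lemma SL2_mult: "x \<in> SL2 \<Longrightarrow> y \<in> SL2 \<Longrightarrow> x ** y \<in> SL2"
  by (simp add: SL2_def det_mul)

lemma mat_1_SL2: "mat 1 \<in> SL2"
  by (simp add: SL2_def)

lemma SL2_central_cases: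
  assumes "z \<in> SL2" "z$1$2 = 0" "z$2$1 = 0" "z$1$1 = z$2$2"
  shows "z = mat 1 \<or> z = - mat 1"
proof -
  obtain p q r t where z: "z = mat22 p q r t" by (rule mat22_cases)
  have "p^2 = 1" using assms by (simp add: z SL2_def power2_eq_square)
  then have "p = 1 \<or> p = -1" by (simp add: power2_eq_1_iff)
  then show ?thesis using assms by (auto simp: z mat_1_eq_mat22)
qed

definition adjugate :: "mat2 \<Rightarrow> mat2" where
  "adjugate A = mat22 (A$2$2) (- A$1$2) (- A$2$1) (A$1$1)"

lemma adjugate_mat22 [simp]: "adjugate (mat22 a b c d) = mat22 d (-b) (-c) a"
  by (simp add: adjugate_def)

lemma det_adjugate [simp]: "det (adjugate A) = det A"
  by (cases A rule: mat22_cases) (simp add: mult.commute)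

lemma adjugate_mult: "adjugate (g ** h) = adjugate h ** adjugate g"
  by (cases g rule: mat22_cases, cases h rule: mat22_cases) (simp add: algebra_simps)

lemma adjugate_mat_1: "adjugate (mat 1) = mat 1"
  by (simp add: mat_1_eq_mat22)

lemma SL2_adjugate_inverse:
  assumes "A \<in> SL2"
  shows "A ** adjugate A = mat 1" "adjugate A ** A = mat 1"
proof -
  obtain a b c d where "A = mat22 a b c d" by (rule mat22_cases)
  with assms show "A ** adjugate A = mat 1" "adjugate A ** A = mat 1"
    by (simp_all add: SL2_def mat_1_eq_mat22 algebra_simps)
qed

lemma SL2_adjugate: "A \<in> SL2 \<Longrightarrow> adjugate A \<in> SL2"
  by (simp add: SL2_def)

lemma matrix_inv_SL2:
  assumes "A \<in> SL2"
  shows "matrix_inv A = adjugate A"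
proof -
  define B where "B = matrix_inv A"
  have AB: "A ** B = mat 1 \<and> B ** A = mat 1"
    unfolding B_def matrix_inv_def
    by (rule someI[of _ "adjugate A"]) (simp add: SL2_adjugate_inverse[OF assms])
  have "B = B ** (A ** adjugate A)" by (simp add: SL2_adjugate_inverse[OF assms])
  also have "\<dots> = adjugate A"
    using AB by (simp add: matrix_mul_assoc)
  finally show ?thesis unfolding B_def .
qed

lemma eval_word_Nil [simp]: "eval_word [] x y = mat 1"
  by (simp add: eval_word_def)

lemma eval_word_Cons [simp]: "eval_word (l # w) x y = eval_letter x y l ** eval_word w x y"
  by (simp add: eval_word_def)

lemma eval_letter_SL2_cases:
  assumes "x \<in> SL2" "y \<in> SL2"
  shows "eval_letter x y l \<in> {x, adjugate x, y, adjugate y}"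
proof -
  obtain a b where "l = (a, b)" by fastforce
  with assms show ?thesis by (cases a; cases b) (simp_all add: matrix_inv_SL2)
qed

lemma eval_word_SL2: "x \<in> SL2 \<Longrightarrow> y \<in> SL2 \<Longrightarrow> eval_word w x y \<in> SL2"
proof (induction w)
  case (Cons l w)
  then show ?case
    using eval_letter_SL2_cases[of x y l] by (auto intro!: SL2_mult SL2_adjugate)
qed (simp add: mat_1_SL2)

lemma iter_word_map_SL2: "x \<in> SL2 \<Longrightarrow> y \<in> SL2 \<Longrightarrow> iter_word_map w n x y \<in> SL2"
  by (induction n) (auto simp: eval_word_SL2)

lemma eval_word_mat_1: "eval_word w (mat 1) (mat 1) = mat 1"
  using eval_letter_SL2_cases[OF mat_1_SL2 mat_1_SL2]
  by (induction w) (auto simp: adjugate_mat_1)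

lemma iter_word_map_mat_1: "iter_word_map w n (mat 1) (mat 1) = mat 1"
  by (induction n) (simp_all add: eval_word_mat_1)

definition conjugate :: "mat2 \<Rightarrow> mat2 \<Rightarrow> mat2" where
  "conjugate g x = g ** x ** adjugate g"

lemma conjugate_mult:
  assumes "g \<in> SL2"
  shows "conjugate g x ** conjugate g y = conjugate g (x ** y)"
proof -
  have "conjugate g x ** conjugate g y = g ** x ** (adjugate g ** g) ** y ** adjugate g"
    unfolding conjugate_def by (simp add: matrix_mul_assoc)
  then show ?thesis
    unfolding conjugate_def SL2_adjugate_inverse[OF assms] by (simp add: matrix_mul_assoc)
qed

lemma conjugate_mat_1: "g \<in> SL2 \<Longrightarrow> conjugate g (mat 1) = mat 1"
  unfolding conjugate_def by (simp add: SL2_adjugate_inverse)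

lemma conjugate_SL2: "g \<in> SL2 \<Longrightarrow> x \<in> SL2 \<Longrightarrow> conjugate g x \<in> SL2"
  unfolding conjugate_def by (simp add: SL2_mult SL2_adjugate)

lemma adjugate_conjugate: "adjugate (conjugate g x) = conjugate g (adjugate x)"
  unfolding conjugate_def adjugate_mult
  by (cases g rule: mat22_cases) (simp add: matrix_mul_assoc)

lemma conjugate_conjugate: "conjugate g (conjugate h x) = conjugate (g ** h) x"
  unfolding conjugate_def adjugate_mult by (simp add: matrix_mul_assoc)

lemma conjugate_adjugate_cancel: "h \<in> SL2 \<Longrightarrow> conjugate (adjugate h) (conjugate h x) = x"
  unfolding conjugate_conjugate
  by (simp add: conjugate_def SL2_adjugate_inverse adjugate_mat_1)

lemma eval_letter_conjugate:
  assumes "g \<in> SL2" "x \<in> SL2" "y \<in> SL2"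
  shows "eval_letter (conjugate g x) (conjugate g y) l = conjugate g (eval_letter x y l)"
proof -
  obtain a b where "l = (a, b)" by fastforce
  with assms show ?thesis
    by (cases a; cases b) (simp_all add: matrix_inv_SL2 conjugate_SL2 adjugate_conjugate)
qed

lemma eval_word_conjugate:
  assumes "g \<in> SL2" "x \<in> SL2" "y \<in> SL2"
  shows "eval_word w (conjugate g x) (conjugate g y) = conjugate g (eval_word w x y)"
  by (induction w) (simp_all add: assms conjugate_mat_1 eval_letter_conjugate conjugate_mult)

lemma iter_word_map_conjugate:
  assumes "g \<in> SL2" "x \<in> SL2" "y \<in> SL2"
  shows "iter_word_map w n (conjugate g x) (conjugate g y) = conjugate g (iter_word_map w n x y)"
  using assms by (induction n) (simp_all add: eval_word_conjugate iter_word_map_SL2)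

definition word_map_image :: "word \<Rightarrow> nat \<Rightarrow> mat2 set" where
  "word_map_image w n = (\<lambda>(x, y). iter_word_map w n x y) ` (SL2 \<times> SL2)"

lemma word_map_image_subset_SL2: "word_map_image w n \<subseteq> SL2"
  unfolding word_map_image_def by (auto simp: iter_word_map_SL2)

lemma mat_1_in_word_map_image: "mat 1 \<in> word_map_image w n"
  unfolding word_map_image_def using mat_1_SL2 iter_word_map_mat_1
  by (intro image_eqI[of _ _ "(mat 1, mat 1)"]) auto

lemma word_map_image_conjugate:
  assumes "g \<in> SL2" "v \<in> word_map_image w n"
  shows "conjugate g v \<in> word_map_image w n"
proof -
  from assms(2) obtain x y where xy: "x \<in> SL2" "y \<in> SL2" "v = iter_word_map w n x y"
    unfolding word_map_image_def by auto
  then have "conjugate g v = iter_word_map w n (conjugate g x) (conjugate g y)"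
    using assms(1) by (simp add: iter_word_map_conjugate)
  moreover have "(conjugate g x, conjugate g y) \<in> SL2 \<times> SL2"
    using assms(1) xy by (simp add: conjugate_SL2)
  ultimately show ?thesis unfolding word_map_image_def by force
qed

subsection \<open>Conjugacy classes in SL(2,\<complex>)\<close>

definition companion :: "complex \<Rightarrow> mat2" where
  "companion c = mat22 0 (-1) 1 c"

text \<open>The first column (w1, w2) of g is a cyclic vector for z; the quadratic form below is
  det g, and it can be normalised to 1 as long as it does not vanish identically, i.e. as
  long as z is not scalar.\<close>
lemma SL2_conjugate_companion:
  assumes z: "z \<in> SL2" "z \<noteq> mat 1" "z \<noteq> - mat 1"
  shows "\<exists>g\<in>SL2. z = conjugate g (companion (trace z))"
proof -
  obtain p q r t where zz: "z = mat22 p q r t" by (rule mat22_cases)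
  have dz: "p*t - q*r = 1" using z by (simp add: SL2_def zz)
  define D where "D = (\<lambda>e1 e2. r*e1^2 + (t - p)*e1*e2 - q*e2^2)"
  have "\<not> (q = 0 \<and> r = 0 \<and> p = t)"
    using SL2_central_cases[OF z(1)] z(2,3) by (auto simp: zz)
  then have "D 1 0 \<noteq> 0 \<or> D 0 1 \<noteq> 0 \<or> D 1 1 \<noteq> 0"
    unfolding D_def by auto
  then obtain e1 e2 where "D e1 e2 \<noteq> 0" by blast
  then have D_normalised: "(inverse (csqrt (D e1 e2)))^2 * D e1 e2 = 1"
    by (simp add: power_inverse field_simps)
  define w1 where "w1 = inverse (csqrt (D e1 e2)) * e1"
  define w2 where "w2 = inverse (csqrt (D e1 e2)) * e2"
  have "D w1 w2 = 1"
    using D_normalised unfolding w1_def w2_def D_def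
    by (simp add: power_mult_distrib power2_eq_square algebra_simps)
  define g where "g = mat22 w1 (p*w1 + q*w2) w2 (r*w1 + t*w2)"
  have gS: "g \<in> SL2" using \<open>D w1 w2 = 1\<close> unfolding g_def SL2_def D_def
    by (simp add: power2_eq_square algebra_simps)
  have "z ** g = g ** companion (trace z)"
    unfolding zz g_def companion_def using dz by simp algebra
  then have "z ** (g ** adjugate g) = g ** companion (trace z) ** adjugate g"
    by (metis matrix_mul_assoc)
  then show ?thesis
    using gS unfolding conjugate_def by (auto simp: SL2_adjugate_inverse)
qed

lemma SL2_conjugate_if_trace_eq:
  assumes "z \<in> SL2" "z \<noteq> mat 1" "z \<noteq> - mat 1"
    and "v \<in> SL2" "v \<noteq> mat 1" "v \<noteq> - mat 1" "trace v = trace z"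
  shows "\<exists>g\<in>SL2. z = conjugate g v"
proof -
  obtain g where g: "g \<in> SL2" "z = conjugate g (companion (trace z))"
    using SL2_conjugate_companion assms(1-3) by blast
  obtain h where h: "h \<in> SL2" "v = conjugate h (companion (trace z))"
    using SL2_conjugate_companion assms(4-7) by metis
  have "z = conjugate (g ** adjugate h) v"
    using g h by (simp add: conjugate_adjugate_cancel conjugate_conjugate[symmetric])
  with g h show ?thesis by (blast intro: SL2_mult SL2_adjugate)
qed

subsection \<open>Traces of iterated word maps\<close>

lemma SL2_traces_surj:
  "\<exists>x\<in>SL2. \<exists>y\<in>SL2. trace x = s \<and> trace y = a \<and> trace (x ** y) = u"
proof -
  define r where "r = csqrt (a^2 - 4)"
  have "r^2 = a^2 - 4" unfolding r_def by simp
  define p where "p = (a + r) / 2"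
  have "p * (a - p) = 1"
    unfolding p_def using \<open>r^2 = a^2 - 4\<close> by (simp add: field_simps power2_eq_square)
  then show ?thesis
    by (intro bexI[of _ "mat22 s 1 (-1) 0"] bexI[of _ "mat22 p 0 (u - s*p) (a - p)"])
      (auto simp: SL2_def)
qed

lemma trace_iter_word_map:
  assumes tp: "trace_polys w P Q" and x: "x \<in> SL2" and y: "y \<in> SL2"
  shows "(trace (iter_word_map w n x y), trace (iter_word_map w n x y ** y)) =
         ((\<lambda>(s, u). (P s (trace y) u, Q s (trace y) u)) ^^ n) (trace x, trace (x ** y))"
proof (induction n)
  case (Suc n)
  have "iter_word_map w n x y \<in> SL2" using iter_word_map_SL2[OF x y] .
  then show ?case using tp y unfolding trace_polys_def by (simp add: Suc[symmetric])
qed simp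

lemma cofinite_range_funpow:
  fixes F :: "'a \<Rightarrow> 'a"
  assumes "finite T" "range F = UNIV - T"
  shows "\<exists>T'. finite T' \<and> UNIV - T' \<subseteq> range (F ^^ n)"
proof (induction n)
  case 0
  show ?case by (intro exI[of _ "{}"]) auto
next
  case (Suc n)
  then obtain T' where T': "finite T'" "UNIV - T' \<subseteq> range (F ^^ n)" by blast
  have "UNIV - (T \<union> F ` T') \<subseteq> F ` (UNIV - T')"
  proof
    fix z assume z: "z \<in> UNIV - (T \<union> F ` T')"
    then obtain y where "z = F y" using assms(2) by auto
    with z show "z \<in> F ` (UNIV - T')" by auto
  qed
  also have "\<dots> \<subseteq> F ` range (F ^^ n)" using T'(2) by (rule image_mono)
  also have "\<dots> = range (F ^^ Suc n)" by (simp add: image_comp)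
  finally show ?case using T' assms(1) by (intro exI[of _ "T \<union> F ` T'"]) simp
qed

lemma word_map_image_noncentral_trace:
  assumes "trace_map_big w"
  shows "\<exists>v \<in> word_map_image w n.
           v \<noteq> mat 1 \<and> v \<noteq> - mat 1 \<and> trace v = c"
proof -
  obtain P Q a where tp: "trace_polys w P Q" and "psi_a_big P Q a"
    using assms unfolding trace_map_big_def by blast
  define F where "F = (\<lambda>(s, u). (P s a u, Q s a u))"
  obtain T where "finite T" "range F = UNIV - T"
    using \<open>psi_a_big P Q a\<close> unfolding psi_a_big_def F_def by blast
  then obtain Tn where Tn: "finite Tn" "UNIV - Tn \<subseteq> range (F ^^ n)"
    by (metis cofinite_range_funpow)
  have "finite ({a, -a} \<union> snd ` Tn)" using Tn(1) by simp
  then obtain u where u: "u \<notin> {a, -a} \<union> snd ` Tn"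
    by (metis UNIV_I ex_new_if_finite infinite_UNIV_char_0)
  then have "(c, u) \<in> range (F ^^ n)" using Tn(2) by force
  then obtain s0 u0 where su: "(F ^^ n) (s0, u0) = (c, u)" by (metis surj_pair rangeE)
  obtain x y where xy: "x \<in> SL2" "y \<in> SL2" "trace x = s0" "trace y = a" "trace (x ** y) = u0"
    using SL2_traces_surj by blast
  define v where "v = iter_word_map w n x y"
  have tv: "trace v = c" "trace (v ** y) = u"
    using trace_iter_word_map[OF tp xy(1,2), of n] xy su unfolding v_def F_def by simp_all
  obtain p q r t where y: "y = mat22 p q r t" by (rule mat22_cases)
  have "trace (mat 1 ** y) = a" "trace (- mat 1 ** y) = - a"
    using xy(4) by (auto simp: y mat_1_eq_mat22 algebra_simps)
  then have "v \<noteq> mat 1 \<and> v \<noteq> - mat 1" using tv(2) u by auto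
  moreover have "v \<in> word_map_image w n"
    unfolding v_def word_map_image_def using xy(1,2) by force
  ultimately show ?thesis using tv(1) by (intro bexI[of _ v]) simp_all
qed

theorem corollary8p3:
  fixes w :: word and n :: nat
  assumes "trace_map_big w" and "n \<ge> 1"
  shows "SL2 - {- mat 1} \<subseteq> (\<lambda>(x, y). iter_word_map w n x y) ` (SL2 \<times> SL2)"
  unfolding word_map_image_def[symmetric]
proof
  fix z assume z: "z \<in> SL2 - {- mat 1}"
  show "z \<in> word_map_image w n"
  proof (cases "z = mat 1")
    case True
    then show ?thesis by (simp add: mat_1_in_word_map_image)
  next
    case False
    obtain v where v: "v \<in> word_map_image w n" "v \<noteq> mat 1" "v \<noteq> - mat 1" "trace v = trace z"
      using word_map_image_noncentral_trace[OF assms(1)] by blast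
    moreover have "v \<in> SL2" using v(1) word_map_image_subset_SL2 by blast
    ultimately obtain g where "g \<in> SL2" "z = conjugate g v"
      using SL2_conjugate_if_trace_eq z False by blast
    then show ?thesis using word_map_image_conjugate v(1) by simp
  qed
qed

end
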